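(* Let $\mathcal H$ be a separable complex Hilbert space, $A_1,A_2\in L(\mathcal H)^+$, $B\in L(\mathcal H)$ with closed range. If $G\in L(\mathcal H)$ is an $A_1A_2$-inverse of $B$, then (1) $A_1BGB=A_1B$ and $A_1BG=(BG)^*A_1$; (2) $A_2GBG=A_2G$ and $A_2GB=(GB)^*A_2$.
   Context: $\|z\|_{A}=\langle Az,z\rangle^{1/2}$ for $A\in L(\mathcal H)^+$. For $y\in\mathcal H$, $x_0$ is an $A_1$-least squares solution ($A_1$-LSS) of $Bx=y$ if $\|y-Bx_0\|_{A_1}\le\|y-Bx\|_{A_1}$ for all $x\in\mathcal H$. $G$ is an $A_1$-inverse of $B$ if $Gy$ is an $A_1$-LSS of $Bx=y$ for every $y$. $G$ is an $A_1A_2$-inverse of $B$ if $G$ is an $A_1$-inverse of $B$ and, for each $y\in\mathcal H$, $\|Gy\|_{A_2}\le\|x_0\|_{A_2}$ for every $A_1$-LSS $x_0$ of $Bx=y$. *)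

theory Defs
  imports "HOL-Analysis.Analysis"
begin

text \<open>No complex Hilbert space class exists in the distribution, so we introduce one:
  a real Banach space carrying a complex scalar multiplication (compatible with the real one)
  and a complex inner product (linear in the first, conjugate linear in the second argument)
  inducing the given norm.\<close>

class complex_hilbert_space = banach +
  fixes scaleC :: "complex \<Rightarrow> 'a \<Rightarrow> 'a"
    and cinner :: "'a \<Rightarrow> 'a \<Rightarrow> complex"
  assumes scaleC_add_right: "scaleC a (x + y) = scaleC a x + scaleC a y"
    and scaleC_add_left: "scaleC (a + b) x = scaleC a x + scaleC b x"
    and scaleC_scaleC: "scaleC a (scaleC b x) = scaleC (a * b) x"
    and scaleC_one: "scaleC 1 x = x"
    and scaleR_scaleC: "scaleR r x = scaleC (complex_of_real r) x"
    and cinner_conj_sym: "cinner x y = cnj (cinner y x)"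
    and cinner_add_left: "cinner (x + y) z = cinner x z + cinner y z"
    and cinner_scaleC_left: "cinner (scaleC a x) y = a * cinner x y"
    and cinner_pos: "0 \<le> Re (cinner x x)"
    and cinner_eq_zero_iff: "cinner x x = 0 \<longleftrightarrow> x = 0"
    and norm_eq_sqrt_cinner: "norm x = sqrt (Re (cinner x x))"

definition bounded_clinear_op :: "('a::complex_hilbert_space \<Rightarrow> 'a) \<Rightarrow> bool" where
  "bounded_clinear_op T \<longleftrightarrow>
     (\<forall>x y. T (x + y) = T x + T y) \<and>
     (\<forall>c x. T (scaleC c x) = scaleC c (T x)) \<and>
     (\<exists>K. \<forall>x. norm (T x) \<le> norm x * K)"

definition positive_op :: "('a::complex_hilbert_space \<Rightarrow> 'a) \<Rightarrow> bool" where
  "positive_op A \<longleftrightarrow> bounded_clinear_op A \<and>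
     (\<forall>z. Im (cinner (A z) z) = 0 \<and> 0 \<le> Re (cinner (A z) z))"

definition adjoint_op :: "('a::complex_hilbert_space \<Rightarrow> 'a) \<Rightarrow> ('a \<Rightarrow> 'a)" where
  "adjoint_op T = (SOME S. \<forall>x y. cinner (T x) y = cinner x (S y))"

definition A_seminorm :: "('a::complex_hilbert_space \<Rightarrow> 'a) \<Rightarrow> 'a \<Rightarrow> real" where
  "A_seminorm A z = sqrt (Re (cinner (A z) z))"

definition is_A_LSS :: "('a::complex_hilbert_space \<Rightarrow> 'a) \<Rightarrow> ('a \<Rightarrow> 'a) \<Rightarrow> 'a \<Rightarrow> 'a \<Rightarrow> bool" where
  "is_A_LSS A B y x0 \<longleftrightarrow> (\<forall>x. A_seminorm A (y - B x0) \<le> A_seminorm A (y - B x))"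

definition is_A_inverse :: "('a::complex_hilbert_space \<Rightarrow> 'a) \<Rightarrow> ('a \<Rightarrow> 'a) \<Rightarrow> ('a \<Rightarrow> 'a) \<Rightarrow> bool" where
  "is_A_inverse A B G \<longleftrightarrow> (\<forall>y. is_A_LSS A B y (G y))"

definition is_AA_inverse ::
  "('a::complex_hilbert_space \<Rightarrow> 'a) \<Rightarrow> ('a \<Rightarrow> 'a) \<Rightarrow> ('a \<Rightarrow> 'a) \<Rightarrow> ('a \<Rightarrow> 'a) \<Rightarrow> bool" where
  "is_AA_inverse A1 A2 B G \<longleftrightarrow> is_A_inverse A1 B G \<and>
     (\<forall>y x0. is_A_LSS A1 B y x0 \<longrightarrow> A_seminorm A2 (G y) \<le> A_seminorm A2 x0)"

end

theory Submission
  imports Defs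
begin

text \<open>If \<open>G y\<close> is an \<open>A\<^sub>1\<close>-least squares solution, the quadratic function
  \<open>t \<mapsto> \<parallel>y - B (G y + t w)\<parallel>\<^sub>A\<^sub>1\<^sup>2\<close> is minimal at \<open>t = 0\<close>, so the residual \<open>y - B G y\<close> is
  \<open>A\<^sub>1\<close>-orthogonal to the range of \<open>B\<close>. The \<open>A\<^sub>1\<close>-least squares solutions of \<open>B x = y\<close> are
  exactly \<open>G y\<close> plus vectors \<open>n\<close> with \<open>A\<^sub>1 B n = 0\<close>, so minimality of \<open>\<parallel>G y\<parallel>\<^sub>A\<^sub>2\<close> makes
  \<open>G y\<close> \<open>A\<^sub>2\<close>-orthogonal to these \<open>n\<close>, among them \<open>x - G B x\<close>. Hence in both cases residuals
  \<open>u - T F u\<close> are \<open>A\<close>-orthogonal to the range of \<open>T\<close>, for \<open>(A, T, F) = (A\<^sub>1, B, G)\<close> and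
  \<open>(A\<^sub>2, G, B)\<close>, and this alone forces \<open>A T F T = A T\<close> and the \<open>A\<close>-selfadjointness
  \<open>A T F = (T F)\<^sup>* A\<close>. The adjoint is characterised through the Riesz representation theorem,
  proved here by minimising the norm on an affine hyperplane.\<close>

lemma cinner_add_right: "cinner x (y + z) = cinner x y + cinner x (z::'a::complex_hilbert_space)"
  by (metis cinner_conj_sym cinner_add_left complex_cnj_add)

lemma cinner_scaleC_right: "cinner x (scaleC a y) = cnj a * cinner x (y::'a::complex_hilbert_space)"
  by (metis cinner_conj_sym cinner_scaleC_left complex_cnj_mult)

lemma cinner_zero_left [simp]: "cinner 0 (y::'a::complex_hilbert_space) = 0"
  using cinner_add_left[of "0::'a" 0 y] by simp

lemma cinner_zero_right [simp]: "cinner y (0::'a::complex_hilbert_space) = 0"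
  by (metis cinner_conj_sym cinner_zero_left complex_cnj_zero)

lemma cinner_minus_left: "cinner (- x) (y::'a::complex_hilbert_space) = - cinner x y"
  using cinner_add_left[of x "-x" y] by (simp add: eq_neg_iff_add_eq_0 add.commute)

lemma cinner_diff_left: "cinner (x - z) (y::'a::complex_hilbert_space) = cinner x y - cinner z y"
  using cinner_add_left[of x "-z" y] cinner_minus_left[of z y] by simp

lemma cinner_minus_right: "cinner y (- x) = - cinner y (x::'a::complex_hilbert_space)"
  by (metis cinner_conj_sym cinner_minus_left complex_cnj_minus)

lemma cinner_diff_right: "cinner y (x - z) = cinner y x - cinner y (z::'a::complex_hilbert_space)"
  by (metis cinner_conj_sym cinner_diff_left complex_cnj_diff)

lemma cinner_self: "cinner x (x::'a::complex_hilbert_space) = complex_of_real ((norm x)\<^sup>2)"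
proof -
  have "Im (cinner x x) = 0" by (metis cinner_conj_sym cnj.sel(2) neg_equal_zero)
  moreover have "Re (cinner x x) = (norm x)\<^sup>2"
    using norm_eq_sqrt_cinner[of x] cinner_pos[of x] by simp
  ultimately show ?thesis by (simp add: complex_eq_iff)
qed

lemma cinner_self_Re: "Re (cinner x x) = (norm (x::'a::complex_hilbert_space))\<^sup>2"
  by (simp add: cinner_self)

lemma cinner_self_Im: "Im (cinner x (x::'a::complex_hilbert_space)) = 0"
  by (simp add: cinner_self)

lemma cinner_ext_right: "(\<And>x. cinner x a = cinner x b) \<Longrightarrow> a = (b::'a::complex_hilbert_space)"
  by (metis cinner_diff_right cinner_eq_zero_iff eq_iff_diff_eq_0)

lemma Cauchy_Schwarz_cinner: "cmod (cinner x y) \<le> norm x * norm (y::'a::complex_hilbert_space)"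
proof (cases "y = 0")
  case True
  then show ?thesis by simp
next
  case False
  define a where "a = cinner x y"
  define b where "b = (norm y)\<^sup>2"
  define c where "c = a / complex_of_real b"
  have b_pos: "b > 0" using False b_def by simp
  have cb: "c * complex_of_real b = a" unfolding c_def using b_pos by simp
  have yy: "cinner y y = complex_of_real b" using cinner_self b_def by metis
  have yx: "cinner y x = cnj a" using a_def cinner_conj_sym by metis
  \<comment> \<open>\<open>x - c y\<close> is the component of \<open>x\<close> orthogonal to \<open>y\<close>\<close>
  have "cinner (x - scaleC c y) (x - scaleC c y)
      = cinner x x - c * cnj a - (cnj c * a - cnj c * (c * complex_of_real b))"
    by (simp only: cinner_diff_left cinner_diff_right cinner_scaleC_left cinner_scaleC_right
        yx yy a_def[symmetric] right_diff_distrib)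
  also have "\<dots> = complex_of_real ((norm x)\<^sup>2 - (cmod a)\<^sup>2 / b)"
    unfolding cb c_def cinner_self[of x] using complex_norm_square[of a] by simp
  finally have "(cmod a)\<^sup>2 / b \<le> (norm x)\<^sup>2"
    using cinner_pos[of "x - scaleC c y"] by simp
  hence "(cmod a)\<^sup>2 \<le> (norm x * norm y)\<^sup>2"
    using b_pos by (simp add: pos_divide_le_eq b_def power_mult_distrib)
  thus ?thesis unfolding a_def by (rule power2_le_imp_le) simp
qed

lemma norm_add_sq:
  "(norm (p + q))\<^sup>2 = (norm p)\<^sup>2 + (norm q)\<^sup>2 + 2 * Re (cinner p (q::'a::complex_hilbert_space))"
proof -
  have "cinner (p + q) (p + q) = cinner p p + cinner q q + (cinner p q + cinner q p)"
    by (simp add: cinner_add_left cinner_add_right algebra_simps)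
  moreover have "Re (cinner q p) = Re (cinner p q)"
    by (metis cinner_conj_sym complex_cnj_cnj cnj.sel(1))
  ultimately show ?thesis by (simp add: cinner_self_Re[symmetric])
qed

lemma parallelogram_law:
  "(norm (p - q))\<^sup>2 + (norm (p + q))\<^sup>2 = 2 * (norm p)\<^sup>2 + 2 * (norm (q::'a::complex_hilbert_space))\<^sup>2"
  using norm_add_sq[of p q] norm_add_sq[of p "-q"] by (simp add: cinner_minus_right)

lemma scaleC_zero_right [simp]: "scaleC c (0::'a::complex_hilbert_space) = 0"
  using scaleC_add_right[of c "0::'a" 0] by simp

lemma bounded_clinear_op_add: "bounded_clinear_op T \<Longrightarrow> T (x + y) = T x + T y"
  unfolding bounded_clinear_op_def by blast

lemma bounded_clinear_op_scaleC: "bounded_clinear_op T \<Longrightarrow> T (scaleC c x) = scaleC c (T x)"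
  unfolding bounded_clinear_op_def by blast

lemma bounded_clinear_op_minus: "bounded_clinear_op T \<Longrightarrow> T (- x) = - T x"
  using bounded_clinear_op_add[of T x "-x"] bounded_clinear_op_add[of T 0 0]
  by (simp add: eq_neg_iff_add_eq_0 add.commute)

lemma bounded_clinear_op_diff: "bounded_clinear_op T \<Longrightarrow> T (x - y) = T x - T y"
  using bounded_clinear_op_add[of T x "-y"] bounded_clinear_op_minus[of T y] by simp

lemma bounded_clinear_op_comp:
  assumes S: "bounded_clinear_op S" and T: "bounded_clinear_op T"
  shows "bounded_clinear_op (S \<circ> T)"
proof -
  obtain K1 where K1: "\<And>x. norm (S x) \<le> norm x * K1"
    using S unfolding bounded_clinear_op_def by blast
  obtain K2 where K2: "\<And>x. norm (T x) \<le> norm x * K2"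
    using T unfolding bounded_clinear_op_def by blast
  have "norm (S (T x)) \<le> norm x * (K2 * \<bar>K1\<bar>)" for x
  proof -
    have "norm (S (T x)) \<le> norm (T x) * K1" by (rule K1)
    also have "\<dots> \<le> norm (T x) * \<bar>K1\<bar>" by (simp add: mult_left_mono)
    also have "\<dots> \<le> norm x * K2 * \<bar>K1\<bar>" using K2 by (simp add: mult_right_mono)
    finally show ?thesis by (simp add: mult.assoc)
  qed
  then show ?thesis using S T unfolding bounded_clinear_op_def comp_def by auto
qed

lemma positive_op_bounded_clinear: "positive_op A \<Longrightarrow> bounded_clinear_op A"
  unfolding positive_op_def by blast

lemma positive_op_Im_form: "positive_op A \<Longrightarrow> Im (cinner (A z) z) = 0"
  unfolding positive_op_def by blast

lemma positive_op_Re_form: "positive_op A \<Longrightarrow> 0 \<le> Re (cinner (A z) z)"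
  unfolding positive_op_def by blast

lemma positive_op_id: "positive_op (id :: 'a::complex_hilbert_space \<Rightarrow> 'a)"
  unfolding positive_op_def bounded_clinear_op_def
  by (auto simp: cinner_self_Im cinner_pos intro: exI[of _ 1])

lemma A_seminorm_le_iff:
  assumes "positive_op A"
  shows "A_seminorm A x \<le> A_seminorm A y \<longleftrightarrow> Re (cinner (A x) x) \<le> Re (cinner (A y) y)"
  unfolding A_seminorm_def using positive_op_Re_form[OF assms] by simp

lemma positive_op_hermitian:
  assumes "positive_op A"
  shows "cinner (A w) z = cnj (cinner (A z) w)"
proof -
  have L: "bounded_clinear_op A" using assms by (rule positive_op_bounded_clinear)
  \<comment> \<open>polarization: the form is real on \<open>z + w\<close> and on \<open>z + i w\<close>\<close>
  have Im_sum: "Im (cinner (A u) v + cinner (A v) u) = 0" for u v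
  proof -
    have "cinner (A (u + v)) (u + v)
        = cinner (A u) u + cinner (A v) v + (cinner (A u) v + cinner (A v) u)"
      by (simp add: bounded_clinear_op_add[OF L] cinner_add_left cinner_add_right)
    thus ?thesis using positive_op_Im_form[OF assms, of "u + v"]
        positive_op_Im_form[OF assms, of u] positive_op_Im_form[OF assms, of v] by simp
  qed
  define p where "p = cinner (A z) w"
  define q where "q = cinner (A w) z"
  have "cinner (A z) (scaleC \<i> w) + cinner (A (scaleC \<i> w)) z = cnj \<i> * p + \<i> * q"
    unfolding p_def q_def
    by (simp add: bounded_clinear_op_scaleC[OF L] cinner_scaleC_left cinner_scaleC_right)
  with Im_sum[of z "scaleC \<i> w"] Im_sum[of z w] show ?thesis
    unfolding p_def[symmetric] q_def[symmetric] by (simp add: complex_eq_iff)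
qed

lemma positive_op_form_on_line:
  assumes "positive_op A"
  shows "cinner (A (v + scaleC t u)) (v + scaleC t u) =
    cinner (A v) v + (cnj t * cinner (A v) u + t * cnj (cinner (A v) u))
      + t * cnj t * cinner (A u) u"
proof -
  have L: "bounded_clinear_op A" using assms by (rule positive_op_bounded_clinear)
  have "cinner (A (v + scaleC t u)) (v + scaleC t u) =
      cinner (A v) v + cnj t * cinner (A v) u + t * cinner (A u) v + t * (cnj t * cinner (A u) u)"
    by (simp add: bounded_clinear_op_add[OF L] bounded_clinear_op_scaleC[OF L] cinner_add_left
        cinner_add_right cinner_scaleC_left cinner_scaleC_right algebra_simps)
  moreover have "cinner (A u) v = cnj (cinner (A v) u)" by (rule positive_op_hermitian[OF assms])
  ultimately show ?thesis by (simp add: algebra_simps)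
qed

lemma positive_op_minimal_imp_orthogonal:
  assumes A: "positive_op A"
    and min: "\<And>t. Re (cinner (A v) v) \<le> Re (cinner (A (v + scaleC t u)) (v + scaleC t u))"
  shows "cinner (A v) u = 0"
proof -
  define a where "a = cinner (A v) u"
  define Q where "Q = Re (cinner (A u) u)"
  define n where "n = (cmod a)\<^sup>2"
  define s where "s = 1 / (Q + 1)"
  have Q0: "Q \<ge> 0" unfolding Q_def by (rule positive_op_Re_form[OF A])
  have s0: "s > 0" and sQ: "s * Q < 1" unfolding s_def using Q0 by (auto simp: field_simps)
  have n0: "n \<ge> 0" unfolding n_def by simp
  \<comment> \<open>step of length \<open>s\<close> against the gradient direction \<open>a\<close>\<close>
  define t where "t = - (complex_of_real s * a)"
  have aa: "a * cnj a = complex_of_real n"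
    unfolding n_def using complex_norm_square[of a] by simp
  have "cnj t * a = - complex_of_real (s * n)" and "t * cnj a = - complex_of_real (s * n)"
    and "t * cnj t = complex_of_real (s * s * n)"
    unfolding t_def using aa by (simp_all add: algebra_simps)
  hence "cinner (A (v + scaleC t u)) (v + scaleC t u) =
      cinner (A v) v - complex_of_real (2 * s * n) + complex_of_real (s * s * n) * cinner (A u) u"
    unfolding positive_op_form_on_line[OF A] a_def[symmetric] by simp
  hence "Re (cinner (A (v + scaleC t u)) (v + scaleC t u))
      = Re (cinner (A v) v) - 2 * s * n + s * s * n * Q"
    unfolding Q_def by simp
  with min[of t] have "2 * s * n \<le> (s * n) * (s * Q)" by (simp add: algebra_simps)
  also have "\<dots> \<le> s * n" using sQ s0 n0 by (simp add: mult_left_le)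
  finally have "n \<le> 0" using s0 by (simp add: mult_le_0_iff)
  thus ?thesis unfolding n_def a_def by simp
qed

lemma positive_op_form_zero_imp_zero:
  assumes A: "positive_op A" and Z: "Re (cinner (A z) z) = 0"
  shows "A z = 0"
proof -
  have "cinner (A z) u = 0" for u
    by (rule positive_op_minimal_imp_orthogonal[OF A]) (use Z positive_op_Re_form[OF A] in simp)
  thus ?thesis using cinner_eq_zero_iff by blast
qed

lemma Cauchy_if_midpoints_bounded_below:
  fixes s :: "nat \<Rightarrow> 'a::complex_hilbert_space"
  assumes upper: "\<And>n. (norm (s n))\<^sup>2 < d + inverse (real (Suc n))"
    and mid: "\<And>m n. d \<le> (norm (scaleR (1/2) (s m + s n)))\<^sup>2"
  shows "Cauchy s"
proof (rule CauchyI)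
  have close: "(norm (s m - s n))\<^sup>2 \<le> 2 * inverse (real (Suc m)) + 2 * inverse (real (Suc n))"
    for m n
  proof -
    have "4 * d \<le> (norm (s m + s n))\<^sup>2"
      using mid[of m n] by (simp add: power_divide)
    thus ?thesis using parallelogram_law[of "s m" "s n"] upper[of m] upper[of n] by linarith
  qed
  fix e :: real
  assume e: "0 < e"
  obtain M where M: "4 / e\<^sup>2 < real M" using reals_Archimedean2 by blast
  have "4 < e\<^sup>2 * real M" using M e by (simp add: field_simps)
  also have "\<dots> \<le> e\<^sup>2 * real (Suc M)" by (intro mult_left_mono) auto
  finally have "4 * inverse (real (Suc M)) < e\<^sup>2" by (simp add: field_simps)
  show "\<exists>M. \<forall>m\<ge>M. \<forall>n\<ge>M. norm (s m - s n) < e"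
  proof (intro exI allI impI)
    fix m n
    assume "M \<le> m" "M \<le> n"
    hence "inverse (real (Suc m)) \<le> inverse (real (Suc M))"
      and "inverse (real (Suc n)) \<le> inverse (real (Suc M))" by (simp_all add: field_simps)
    hence "(norm (s m - s n))\<^sup>2 < e\<^sup>2"
      using close[of m n] \<open>4 * inverse (real (Suc M)) < e\<^sup>2\<close> by linarith
    thus "norm (s m - s n) < e" using e by (simp add: power_less_imp_less_base)
  qed
qed

lemma exists_min_norm_point:
  fixes C :: "'a::complex_hilbert_space set"
  assumes "C \<noteq> {}" and "closed C"
    and midpoint: "\<And>x y. x \<in> C \<Longrightarrow> y \<in> C \<Longrightarrow> scaleR (1/2) (x + y) \<in> C"
  shows "\<exists>u\<in>C. \<forall>x\<in>C. norm u \<le> norm x"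
proof -
  define d where "d = Inf ((\<lambda>x. (norm x)\<^sup>2) ` C)"
  have bdd: "bdd_below ((\<lambda>x. (norm x)\<^sup>2) ` C)" by (rule bdd_belowI[of _ 0]) auto
  have lower: "d \<le> (norm x)\<^sup>2" if "x \<in> C" for x
    unfolding d_def using bdd that by (simp add: cInf_lower)
  have "\<exists>x\<in>C. (norm x)\<^sup>2 < d + inverse (real (Suc n))" for n
    using cInf_lessD[of "(\<lambda>x. (norm x)\<^sup>2) ` C" "d + inverse (real (Suc n))"] \<open>C \<noteq> {}\<close>
    unfolding d_def by auto
  then obtain s where sC: "\<And>n. s n \<in> C"
    and upper: "\<And>n. (norm (s n))\<^sup>2 < d + inverse (real (Suc n))" by metis
  have "Cauchy s"
    using upper by (rule Cauchy_if_midpoints_bounded_below) (intro lower midpoint sC)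
  then obtain u where lim: "s \<longlonglongrightarrow> u" using Cauchy_convergent_iff convergent_def by blast
  have "u \<in> C" using closed_sequentially[OF \<open>closed C\<close> sC lim] .
  have "(\<lambda>n. (norm (s n))\<^sup>2) \<longlonglongrightarrow> (norm u)\<^sup>2" by (intro tendsto_intros lim)
  moreover have "(\<lambda>n. d + inverse (real (Suc n))) \<longlonglongrightarrow> d + 0"
    by (intro tendsto_intros LIMSEQ_inverse_real_of_nat)
  ultimately have "(norm u)\<^sup>2 \<le> d + 0"
    by (rule LIMSEQ_le) (intro exI allI impI less_imp_le upper)
  hence "(norm u)\<^sup>2 \<le> (norm x)\<^sup>2" if "x \<in> C" for x using lower[OF that] by linarith
  hence "norm u \<le> norm x" if "x \<in> C" for x using that by (metis norm_ge_zero power2_le_imp_le)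
  with \<open>u \<in> C\<close> show ?thesis by blast
qed

lemma riesz_representation:
  fixes f :: "'a::complex_hilbert_space \<Rightarrow> complex"
  assumes add: "\<And>x y. f (x + y) = f x + f y"
    and scale: "\<And>c x. f (scaleC c x) = c * f x"
    and bound: "\<And>x. cmod (f x) \<le> norm x * K"
  shows "\<exists>u. \<forall>x. f x = cinner x u"
proof (cases "\<forall>x. f x = 0")
  case True
  then show ?thesis by (intro exI[of _ 0]) simp
next
  case False
  then obtain x0 where x0: "f x0 \<noteq> 0" by blast
  have f_scaleR: "f (scaleR r x) = scaleR r (f x)" for r x
    by (simp add: scaleR_scaleC scale scaleR_conv_of_real)
  have f_diff: "f (x - y) = f x - f y" for x y
    using add[of x "-y"] f_scaleR[of "-1" y] by simp
  have "bounded_linear f" by (rule bounded_linear_intro[OF add f_scaleR bound])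
  hence "closed {x. f x = 1}"
    by (intro closed_Collect_eq linear_continuous_on continuous_on_const)
  moreover have "scaleC (1 / f x0) x0 \<in> {x. f x = 1}" using x0 by (simp add: scale)
  moreover have "scaleR (1/2) (x + y) \<in> {x. f x = 1}" if "x \<in> {x. f x = 1}" "y \<in> {x. f x = 1}"
    for x y using that by (simp add: f_scaleR add scaleR_conv_of_real)
  ultimately obtain u0 where fu0: "f u0 = 1" and min: "\<And>x. f x = 1 \<Longrightarrow> norm u0 \<le> norm x"
    using exists_min_norm_point[of "{x. f x = 1}"] by blast
  \<comment> \<open>the minimal point of the hyperplane \<open>f = 1\<close> is orthogonal to the kernel of \<open>f\<close>\<close>
  have orth: "cinner u0 k = 0" if k: "f k = 0" for k
  proof -
    have "cinner (id u0) k = 0"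
    proof (rule positive_op_minimal_imp_orthogonal[OF positive_op_id])
      fix t
      have "norm u0 \<le> norm (u0 + scaleC t k)" using fu0 k by (intro min) (simp add: add scale)
      thus "Re (cinner (id u0) u0) \<le> Re (cinner (id (u0 + scaleC t k)) (u0 + scaleC t k))"
        by (simp add: cinner_self_Re power_mono)
    qed
    thus ?thesis by simp
  qed
  define N where "N = cinner u0 u0"
  have "u0 \<noteq> 0" using fu0 add[of 0 0] by auto
  hence "N \<noteq> 0" unfolding N_def using cinner_eq_zero_iff by blast
  have "f x = cinner x (scaleC (inverse (cnj N)) u0)" for x
  proof -
    have "f (x - scaleC (f x) u0) = 0" using f_diff scale fu0 by simp
    hence "cinner u0 (x - scaleC (f x) u0) = 0" by (rule orth)
    hence "cinner (x - scaleC (f x) u0) u0 = 0" by (metis cinner_conj_sym complex_cnj_zero)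
    hence "cinner x u0 = f x * N"
      unfolding N_def by (simp add: cinner_diff_left cinner_scaleC_left)
    thus ?thesis using \<open>N \<noteq> 0\<close> by (simp add: cinner_scaleC_right)
  qed
  thus ?thesis by blast
qed

lemma adjoint_op_cinner:
  assumes T: "bounded_clinear_op T"
  shows "cinner (T x) y = cinner x (adjoint_op T y)"
proof -
  obtain K where K: "\<And>x. norm (T x) \<le> norm x * K"
    using T unfolding bounded_clinear_op_def by blast
  have "\<exists>u. \<forall>x. cinner (T x) y = cinner x u" for y
  proof (rule riesz_representation)
    fix x
    have "cmod (cinner (T x) y) \<le> norm (T x) * norm y" by (rule Cauchy_Schwarz_cinner)
    also have "\<dots> \<le> norm x * K * norm y" using K by (simp add: mult_right_mono)
    finally show "cmod (cinner (T x) y) \<le> norm x * (K * norm y)" by (simp add: mult.assoc)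
  qed (simp_all add: bounded_clinear_op_add[OF T] bounded_clinear_op_scaleC[OF T]
      cinner_add_left cinner_scaleC_left)
  hence "\<exists>S. \<forall>x y. cinner (T x) y = cinner x (S y)" by metis
  hence "\<forall>x y. cinner (T x) y = cinner x (adjoint_op T y)"
    unfolding adjoint_op_def by (rule someI_ex)
  thus ?thesis by blast
qed

definition A_residual_orthogonal ::
  "('a::complex_hilbert_space \<Rightarrow> 'a) \<Rightarrow> ('a \<Rightarrow> 'a) \<Rightarrow> ('a \<Rightarrow> 'a) \<Rightarrow> bool" where
  "A_residual_orthogonal A T F \<longleftrightarrow> (\<forall>u w. cinner (A (u - T (F u))) (T w) = 0)"

lemma A_residual_orthogonal_fixes_range:
  assumes A: "positive_op A" and T: "bounded_clinear_op T"
    and orth: "A_residual_orthogonal A T F"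
  shows "A (T (F (T x))) = A (T x)"
proof -
  have AL: "bounded_clinear_op A" using A by (rule positive_op_bounded_clinear)
  define z where "z = T (F (T x)) - T x"
  \<comment> \<open>\<open>z\<close> is minus a residual and lies in the range of \<open>T\<close>\<close>
  have "cinner (A (T x - T (F (T x)))) (T (F (T x) - x)) = 0"
    using orth unfolding A_residual_orthogonal_def by blast
  hence "cinner (A (- z)) z = 0" unfolding z_def by (simp add: bounded_clinear_op_diff[OF T])
  hence "Re (cinner (A z) z) = 0"
    by (simp add: bounded_clinear_op_minus[OF AL] cinner_minus_left)
  hence "A z = 0" by (rule positive_op_form_zero_imp_zero[OF A])
  thus ?thesis unfolding z_def by (simp add: bounded_clinear_op_diff[OF AL])
qed

lemma A_residual_orthogonal_adjoint:
  assumes A: "positive_op A" and T: "bounded_clinear_op T" and F: "bounded_clinear_op F"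
    and orth: "A_residual_orthogonal A T F"
  shows "adjoint_op (T \<circ> F) (A z) = A (T (F z))"
proof (rule cinner_ext_right)
  fix x
  have AL: "bounded_clinear_op A" using A by (rule positive_op_bounded_clinear)
  have res: "cinner (A (u - T (F u))) (T w) = 0" for u w
    using orth unfolding A_residual_orthogonal_def by blast
  define P where "P = cinner (A (T (F z))) (T (F x))"
  have "cinner (A (T (F z))) (x - T (F x)) = 0"
    using positive_op_hermitian[OF A, of "T (F z)" "x - T (F x)"] res[of x "F z"] by simp
  hence xP: "cinner (A (T (F z))) x = P" unfolding P_def by (simp add: cinner_diff_right)
  have "cinner (A (z - T (F z))) (T (F x)) = 0" by (rule res)
  hence zP: "cinner (A z) (T (F x)) = P"
    unfolding P_def by (simp add: bounded_clinear_op_diff[OF AL] cinner_diff_left)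
  have "cinner x (adjoint_op (T \<circ> F) (A z)) = cinner (T (F x)) (A z)"
    using adjoint_op_cinner[OF bounded_clinear_op_comp[OF T F], of x "A z"] by simp
  also have "\<dots> = cnj P" using zP by (metis cinner_conj_sym)
  also have "\<dots> = cinner x (A (T (F z)))" using xP by (metis cinner_conj_sym)
  finally show "cinner x (adjoint_op (T \<circ> F) (A z)) = cinner x (A (T (F z)))" .
qed

lemma A_LSS_residual_orthogonal:
  assumes A: "positive_op A" and B: "bounded_clinear_op B" and lss: "is_A_LSS A B y x0"
  shows "cinner (A (y - B x0)) (B w) = 0"
proof (rule positive_op_minimal_imp_orthogonal[OF A])
  fix t
  have "A_seminorm A (y - B x0) \<le> A_seminorm A (y - B (x0 - scaleC t w))"
    using lss unfolding is_A_LSS_def by blast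
  moreover have "y - B (x0 - scaleC t w) = (y - B x0) + scaleC t (B w)"
    by (simp add: bounded_clinear_op_diff[OF B] bounded_clinear_op_scaleC[OF B])
  ultimately show "Re (cinner (A (y - B x0)) (y - B x0))
      \<le> Re (cinner (A (y - B x0 + scaleC t (B w))) (y - B x0 + scaleC t (B w)))"
    using A_seminorm_le_iff[OF A] by simp
qed

lemma A_LSS_add_null:
  assumes A: "positive_op A" and B: "bounded_clinear_op B"
    and lss: "is_A_LSS A B y x0" and null: "A (B n) = 0"
  shows "is_A_LSS A B y (x0 + n)"
proof -
  have AL: "bounded_clinear_op A" using A by (rule positive_op_bounded_clinear)
  define v where "v = y - B x0"
  have "cinner (A v) (B n) = 0" using positive_op_hermitian[OF A, of v "B n"] null by simp
  hence "cinner (A (v - B n)) (v - B n) = cinner (A v) v"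
    using null by (simp add: bounded_clinear_op_diff[OF AL] cinner_diff_left cinner_diff_right)
  moreover have "y - B (x0 + n) = v - B n" unfolding v_def by (simp add: bounded_clinear_op_add[OF B])
  ultimately have "A_seminorm A (y - B (x0 + n)) = A_seminorm A (y - B x0)"
    unfolding A_seminorm_def v_def by metis
  thus ?thesis using lss unfolding is_A_LSS_def by simp
qed

lemma A_inverse_residual_orthogonal:
  assumes "positive_op A" and "bounded_clinear_op B" and "is_A_inverse A B G"
  shows "A_residual_orthogonal A B G"
  using A_LSS_residual_orthogonal assms
  unfolding A_residual_orthogonal_def is_A_inverse_def by blast

lemma AA_inverse_orthogonal_to_null:
  assumes A1: "positive_op A1" and A2: "positive_op A2" and B: "bounded_clinear_op B"
    and inv: "is_AA_inverse A1 A2 B G" and null: "A1 (B n) = 0"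
  shows "cinner (A2 (G y)) n = 0"
proof (rule positive_op_minimal_imp_orthogonal[OF A2])
  fix t
  have "A1 (B (scaleC t n)) = 0"
    using null by (simp add: bounded_clinear_op_scaleC[OF B]
        bounded_clinear_op_scaleC[OF positive_op_bounded_clinear[OF A1]])
  moreover have "is_A_LSS A1 B y (G y)" using inv unfolding is_AA_inverse_def is_A_inverse_def by blast
  ultimately have "is_A_LSS A1 B y (G y + scaleC t n)" by (rule A_LSS_add_null[OF A1 B, rotated])
  hence "A_seminorm A2 (G y) \<le> A_seminorm A2 (G y + scaleC t n)"
    using inv unfolding is_AA_inverse_def by blast
  thus "Re (cinner (A2 (G y)) (G y)) \<le> Re (cinner (A2 (G y + scaleC t n)) (G y + scaleC t n))"
    using A_seminorm_le_iff[OF A2] by simp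
qed

lemma AA_inverse_residual_orthogonal:
  assumes A1: "positive_op A1" and A2: "positive_op A2" and B: "bounded_clinear_op B"
    and inv: "is_AA_inverse A1 A2 B G"
  shows "A_residual_orthogonal A2 G B"
  unfolding A_residual_orthogonal_def
proof (intro allI)
  fix u w
  have "A_residual_orthogonal A1 B G"
    using A_inverse_residual_orthogonal[OF A1 B] inv unfolding is_AA_inverse_def by blast
  hence "A1 (B (G (B u))) = A1 (B u)" by (rule A_residual_orthogonal_fixes_range[OF A1 B])
  hence "A1 (B (u - G (B u))) = 0"
    by (simp add: bounded_clinear_op_diff[OF B]
        bounded_clinear_op_diff[OF positive_op_bounded_clinear[OF A1]])
  hence "cinner (A2 (G w)) (u - G (B u)) = 0" by (rule AA_inverse_orthogonal_to_null[OF A1 A2 B inv])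
  thus "cinner (A2 (u - G (B u))) (G w) = 0"
    using positive_op_hermitian[OF A2, of "u - G (B u)" "G w"] by simp
qed

theorem mainTheorem17:
  fixes A1 A2 B G :: "'a::complex_hilbert_space \<Rightarrow> 'a"
  assumes "separable_space (euclidean :: 'a topology)"
    and "positive_op A1" and "positive_op A2"
    and "bounded_clinear_op B" and "closed (range B)"
    and "bounded_clinear_op G"
    and "is_AA_inverse A1 A2 B G"
  shows "(A1 \<circ> B \<circ> G \<circ> B = A1 \<circ> B \<and> A1 \<circ> B \<circ> G = adjoint_op (B \<circ> G) \<circ> A1) \<and>
         (A2 \<circ> G \<circ> B \<circ> G = A2 \<circ> G \<and> A2 \<circ> G \<circ> B = adjoint_op (G \<circ> B) \<circ> A2)"
proof -
  have orth1: "A_residual_orthogonal A1 B G"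
    using A_inverse_residual_orthogonal assms(2,4,7) unfolding is_AA_inverse_def by blast
  have orth2: "A_residual_orthogonal A2 G B"
    using AA_inverse_residual_orthogonal assms(2,3,4,7) .
  show ?thesis
    by (intro conjI ext)
      (simp_all add: A_residual_orthogonal_fixes_range[OF assms(2,4) orth1]
        A_residual_orthogonal_adjoint[OF assms(2,4,6) orth1]
        A_residual_orthogonal_fixes_range[OF assms(3,6) orth2]
        A_residual_orthogonal_adjoint[OF assms(3,6,4) orth2])
qed

end
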